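(* Let $P$ be a finite lattice, let $\mu:2^P\to\mathbb{R}_{\ge0}$ be additive, and let $r(f)=\mu(P\setminus\Phi f)$ for $f\in\mathcal{L}_P$. Define $\mathrm{fragility}(f)=\max\{r(w): w\in\mathcal{L}_P,\ w\le f,\ w\text{ prime}\}$. Then for all $f,g\in\mathcal{L}_P$, $\mathrm{fragility}(f+g)\le\mathrm{fragility}(f)+\mathrm{fragility}(g)$.
   Context: $P$ is a finite lattice. $\mathcal{L}_P$ is the set of maps $f:P\to P$ satisfying (A.1) $a\le f(a)$; (A.2) $a\le b\Rightarrow f(a)\le f(b)$; (A.3) $f(f(a))=f(a)$, ordered pointwise; it is a lattice with join $+$. $\Phi f=\{a:f(a)=a\}$. $f$ is prime if $P\setminus\Phi f$ is closed under $\wedge$. *)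

theory Defs
  imports Complex_Main
begin

text \<open>P is modelled as a finite type 'a with a lattice structure.
  Closure operators (A.1)-(A.3), ordered pointwise (the standard order on functions).\<close>

definition closure_ops :: "('a::order \<Rightarrow> 'a) set" where
  "closure_ops = {f. (\<forall>a. a \<le> f a) \<and> (\<forall>a b. a \<le> b \<longrightarrow> f a \<le> f b) \<and> (\<forall>a. f (f a) = f a)}"

definition fixset :: "('a \<Rightarrow> 'a) \<Rightarrow> 'a set" where
  "fixset f = {a. f a = a}"

text \<open>The join (+) in the lattice of closure operators: least upper bound within closure_ops.\<close>
definition cjoin :: "('a::order \<Rightarrow> 'a) \<Rightarrow> ('a \<Rightarrow> 'a) \<Rightarrow> ('a \<Rightarrow> 'a)" where
  "cjoin f g = (THE h. h \<in> closure_ops \<and> f \<le> h \<and> g \<le> h \<and>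
       (\<forall>k\<in>closure_ops. f \<le> k \<and> g \<le> k \<longrightarrow> h \<le> k))"

definition prime_cl :: "('a::lattice \<Rightarrow> 'a) \<Rightarrow> bool" where
  "prime_cl f = (\<forall>a b. a \<notin> fixset f \<and> b \<notin> fixset f \<longrightarrow> inf a b \<notin> fixset f)"

definition additive_measure :: "('a set \<Rightarrow> real) \<Rightarrow> bool" where
  "additive_measure \<mu> = ((\<forall>A. 0 \<le> \<mu> A) \<and> (\<forall>A B. A \<inter> B = {} \<longrightarrow> \<mu> (A \<union> B) = \<mu> A + \<mu> B))"

definition rk :: "('a set \<Rightarrow> real) \<Rightarrow> ('a \<Rightarrow> 'a) \<Rightarrow> real" where
  "rk \<mu> f = \<mu> (UNIV - fixset f)"

definition fragility :: "('a set \<Rightarrow> real) \<Rightarrow> ('a::lattice \<Rightarrow> 'a) \<Rightarrow> real" where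
  "fragility \<mu> f = Max {rk \<mu> w | w. w \<in> closure_ops \<and> w \<le> f \<and> prime_cl w}"

end

theory Submission
  imports Defs
begin

text \<open>A prime closure \<open>w \<le> f + g\<close> is determined by its set \<open>N\<close> of non-fixed points, which is
  closed under meets, has meet-closed complement containing the top, and avoids
  \<open>Fix f \<inter> Fix g = Fix (f + g)\<close>. Call such sets prime. By induction on \<open>|N|\<close>, \<open>N\<close> is covered
  by prime sets \<open>N\<^sub>1\<close>, \<open>N\<^sub>2\<close> avoiding \<open>Fix f\<close> and \<open>Fix g\<close> respectively: the least element
  \<open>m\<close> of \<open>N\<close> is moved by \<open>f\<close>, say; cover \<open>N \<inter> \<up>(f m)\<close> recursively and enlarge its
  \<open>f\<close>-part by \<open>\<up>m - \<up>(f m)\<close>, which contains no \<open>f\<close>-closed point. Every prime set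
  avoiding \<open>Fix f\<close> is the non-fixed set of a prime closure below \<open>f\<close>, so
  \<open>r(w) = \<mu>(N) \<le> \<mu>(N\<^sub>1) + \<mu>(N\<^sub>2) \<le> fragility(f) + fragility(g)\<close>.\<close>

definition lattice_top :: "'a::{finite,lattice}" where
  "lattice_top = Sup_fin UNIV"

lemma le_lattice_top: "(x::'a::{finite,lattice}) \<le> lattice_top"
  unfolding lattice_top_def by (rule Sup_fin.coboundedI) auto

definition meet_closed :: "'a::lattice set \<Rightarrow> bool" where
  "meet_closed A \<longleftrightarrow> (\<forall>a\<in>A. \<forall>b\<in>A. inf a b \<in> A)"

definition moore_family :: "'a::{finite,lattice} set \<Rightarrow> bool" where
  "moore_family M \<longleftrightarrow> meet_closed M \<and> lattice_top \<in> M"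

definition prime_set :: "'a::{finite,lattice} set \<Rightarrow> bool" where
  "prime_set N \<longleftrightarrow> meet_closed N \<and> moore_family (- N)"

definition closure_of :: "'a::{finite,lattice} set \<Rightarrow> 'a \<Rightarrow> 'a" where
  "closure_of M x = Inf_fin {y \<in> M. x \<le> y}"

lemma Inf_fin_mem_meet_closed:
  assumes "finite A" "A \<noteq> {}" "A \<subseteq> M" "meet_closed M"
  shows "Inf_fin A \<in> M"
  using assms(1-3)
proof (induction A rule: finite_ne_induct)
  case (insert a A)
  then show ?case
    using assms(4) unfolding meet_closed_def by simp
qed simp

lemma closure_of_least_above:
  assumes "moore_family M"
  shows "closure_of M x \<in> M" "x \<le> closure_of M x"
    and "y \<in> M \<Longrightarrow> x \<le> y \<Longrightarrow> closure_of M x \<le> y"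
proof -
  let ?U = "{y \<in> M. x \<le> y}"
  have "lattice_top \<in> ?U"
    using assms le_lattice_top unfolding moore_family_def by blast
  then have ne: "?U \<noteq> {}" by blast
  have "meet_closed ?U"
    using assms unfolding moore_family_def meet_closed_def by simp
  then show "closure_of M x \<in> M"
    using Inf_fin_mem_meet_closed[OF _ ne subset_refl] unfolding closure_of_def by simp
  show "x \<le> closure_of M x"
    unfolding closure_of_def by (rule Inf_fin.boundedI) (use ne in auto)
  show "closure_of M x \<le> y" if "y \<in> M" "x \<le> y"
    unfolding closure_of_def by (rule Inf_fin.coboundedI) (use that in auto)
qed

lemma closure_of_fixed:
  assumes "moore_family M" "x \<in> M"
  shows "closure_of M x = x"
  using closure_of_least_above[OF assms(1)] assms(2) by (meson order.antisym order_refl)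

lemma closure_of_closure_ops:
  assumes "moore_family M"
  shows "closure_of M \<in> closure_ops"
  unfolding closure_ops_def
proof (intro CollectI conjI allI impI)
  note closure = closure_of_least_above[OF assms]
  fix a b :: 'a
  show "a \<le> closure_of M a" by (rule closure(2))
  show "closure_of M (closure_of M a) = closure_of M a"
    by (rule closure_of_fixed[OF assms closure(1)])
  assume "a \<le> b"
  also have "b \<le> closure_of M b" by (rule closure(2))
  finally show "closure_of M a \<le> closure_of M b" by (rule closure(3)[OF closure(1)])
qed

lemma fixset_closure_of:
  assumes "moore_family M"
  shows "fixset (closure_of M) = M"
proof (intro set_eqI iffI)
  fix x
  show "x \<in> M" if "x \<in> fixset (closure_of M)"
    using that closure_of_least_above(1)[OF assms, of x] by (simp add: fixset_def)
  show "x \<in> fixset (closure_of M)" if "x \<in> M"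
    using closure_of_fixed[OF assms that] by (simp add: fixset_def)
qed

lemma moore_family_fixset:
  assumes "f \<in> closure_ops"
  shows "moore_family (fixset (f::'a::{finite,lattice} \<Rightarrow> 'a))"
proof -
  have "f (inf a b) = inf a b" if "f a = a" "f b = b" for a b
  proof (rule order.antisym)
    have "f (inf a b) \<le> f a" "f (inf a b) \<le> f b"
      using assms unfolding closure_ops_def by auto
    then show "f (inf a b) \<le> inf a b" using that by simp
  qed (use assms in \<open>simp add: closure_ops_def\<close>)
  moreover have "f lattice_top = lattice_top"
  proof (rule order.antisym)
    show "lattice_top \<le> f lattice_top" using assms unfolding closure_ops_def by blast
  qed (rule le_lattice_top)
  ultimately show ?thesis
    unfolding moore_family_def meet_closed_def fixset_def by simp
qed

lemma moore_family_Int: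
  assumes "moore_family A" "moore_family B"
  shows "moore_family (A \<inter> B)"
  using assms unfolding moore_family_def meet_closed_def by simp

lemma closure_ops_le_iff_fixset:
  assumes f: "f \<in> closure_ops" and w: "w \<in> closure_ops"
  shows "w \<le> f \<longleftrightarrow> fixset f \<subseteq> fixset (w::'a::order \<Rightarrow> 'a)"
proof
  assume "w \<le> f"
  show "fixset f \<subseteq> fixset w"
  proof
    fix x assume "x \<in> fixset f"
    then have "w x \<le> x" using le_funD[OF \<open>w \<le> f\<close>, of x] by (simp add: fixset_def)
    moreover have "x \<le> w x" using w by (simp add: closure_ops_def)
    ultimately show "x \<in> fixset w" by (simp add: fixset_def)
  qed
next
  assume fix_sub: "fixset f \<subseteq> fixset w"
  show "w \<le> f"
  proof (rule le_funI)
    fix x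
    have "f x \<in> fixset f" using f by (simp add: closure_ops_def fixset_def)
    then have "w (f x) = f x" using fix_sub by (auto simp: fixset_def)
    moreover have "w x \<le> w (f x)" using f w by (simp add: closure_ops_def)
    ultimately show "w x \<le> f x" by simp
  qed
qed

lemma cjoin_eq_closure_of:
  fixes f g :: "'a::{finite,lattice} \<Rightarrow> 'a"
  assumes f: "f \<in> closure_ops" and g: "g \<in> closure_ops"
  shows "cjoin f g = closure_of (fixset f \<inter> fixset g)"
proof -
  have moore: "moore_family (fixset f \<inter> fixset g)"
    using moore_family_Int moore_family_fixset f g by blast
  define k where "k = closure_of (fixset f \<inter> fixset g)"
  have k: "k \<in> closure_ops" "fixset k = fixset f \<inter> fixset g"
    unfolding k_def using closure_of_closure_ops[OF moore] fixset_closure_of[OF moore] by auto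
  have "k \<le> h \<longleftrightarrow> f \<le> h \<and> g \<le> h" if "h \<in> closure_ops" for h
    using closure_ops_le_iff_fixset[OF that k(1)] closure_ops_le_iff_fixset[OF that f]
      closure_ops_le_iff_fixset[OF that g] k(2) by auto
  then have "cjoin f g = k"
    unfolding cjoin_def using k(1) by (intro the_equality) (auto intro: order.antisym)
  then show ?thesis unfolding k_def .
qed

lemma closure_ops_cjoin:
  fixes f g :: "'a::{finite,lattice} \<Rightarrow> 'a"
  assumes "f \<in> closure_ops" "g \<in> closure_ops"
  shows "cjoin f g \<in> closure_ops" "fixset (cjoin f g) = fixset f \<inter> fixset g"
proof -
  have moore: "moore_family (fixset f \<inter> fixset g)"
    using moore_family_Int moore_family_fixset assms by blast
  show "cjoin f g \<in> closure_ops" "fixset (cjoin f g) = fixset f \<inter> fixset g"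
    unfolding cjoin_eq_closure_of[OF assms]
    using closure_of_closure_ops[OF moore] fixset_closure_of[OF moore] by simp_all
qed

lemma prime_cl_iff_meet_closed: "prime_cl w \<longleftrightarrow> meet_closed (- fixset w)"
  unfolding prime_cl_def meet_closed_def by blast

lemma prime_set_nonfixed:
  assumes "w \<in> closure_ops" "prime_cl w"
  shows "prime_set (- fixset (w::'a::{finite,lattice} \<Rightarrow> 'a))"
  using assms moore_family_fixset[OF assms(1)]
  unfolding prime_set_def prime_cl_iff_meet_closed by simp

lemma prime_cl_closure_of_compl:
  assumes "prime_set N"
  shows "closure_of (- N) \<in> closure_ops" "fixset (closure_of (- N)) = - N"
    and "prime_cl (closure_of (- N))"
proof -
  have moore: "moore_family (- N)" and "meet_closed N"
    using assms unfolding prime_set_def by auto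
  show "closure_of (- N) \<in> closure_ops" by (rule closure_of_closure_ops[OF moore])
  show fix_eq: "fixset (closure_of (- N)) = - N" by (rule fixset_closure_of[OF moore])
  show "prime_cl (closure_of (- N))"
    unfolding prime_cl_iff_meet_closed fix_eq by (simp add: \<open>meet_closed N\<close>)
qed

lemma prime_set_empty: "prime_set {}"
  unfolding prime_set_def moore_family_def meet_closed_def by simp

lemma prime_set_Int_upset:
  assumes "prime_set N"
  shows "prime_set (N \<inter> {x. c \<le> x})"
  using assms le_lattice_top[of c]
  unfolding prime_set_def moore_family_def meet_closed_def by auto

lemma prime_set_patch:
  assumes "prime_set N" "m \<le> c"
  shows "prime_set ({x. m \<le> x \<and> \<not> c \<le> x} \<union> (N \<inter> {x. c \<le> x}))"
    (is "prime_set ?N")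
proof -
  have "inf a b \<in> ?N" if "a \<in> ?N" "b \<in> ?N" for a b
  proof (cases "c \<le> a \<and> c \<le> b")
    case True
    then show ?thesis
      using that assms(1) unfolding prime_set_def meet_closed_def by auto
  next
    case False
    have "m \<le> a" "m \<le> b" using that assms(2) order_trans by auto
    with False show ?thesis by auto
  qed
  moreover have "inf a b \<notin> ?N" if "a \<notin> ?N" "b \<notin> ?N" for a b
  proof (cases "m \<le> a \<and> m \<le> b")
    case True
    then have "c \<le> a" "c \<le> b" "a \<notin> N" "b \<notin> N" using that by auto
    then have "c \<le> inf a b" "inf a b \<notin> N"
      using assms(1) unfolding prime_set_def moore_family_def meet_closed_def by auto
    then show ?thesis by auto
  next
    case False
    then have "\<not> m \<le> inf a b" by simp
    moreover have "\<not> c \<le> inf a b" using calculation assms(2) order_trans by blast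
    ultimately show ?thesis by blast
  qed
  moreover have "lattice_top \<notin> ?N"
    using assms(1) le_lattice_top[of c] unfolding prime_set_def moore_family_def by auto
  ultimately show ?thesis
    unfolding prime_set_def moore_family_def meet_closed_def by blast
qed

lemma patch_disjoint_fixset:
  assumes "h \<in> closure_ops" "N \<inter> fixset h = {}"
  shows "({x. m \<le> x \<and> \<not> h m \<le> x} \<union> (N \<inter> {x. h m \<le> x})) \<inter> fixset h = {}"
proof -
  have "h m \<le> x" if "m \<le> x" "x \<in> fixset h" for x
  proof -
    have "h m \<le> h x" using assms(1) that(1) by (simp add: closure_ops_def)
    also have "h x = x" using that(2) by (simp add: fixset_def)
    finally show ?thesis .
  qed
  then show ?thesis using assms(2) by blast
qed

lemma prime_set_cover_step:
  assumes h: "h \<in> closure_ops" and m: "m \<in> N" "\<forall>y\<in>N. m \<le> y"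
    and N': "prime_set N'" "N' \<inter> fixset h = {}"
    and cover: "N \<inter> {x. h m \<le> x} \<subseteq> N' \<union> N''"
  shows "\<exists>N\<^sub>1. prime_set N\<^sub>1 \<and> N\<^sub>1 \<inter> fixset h = {} \<and> N \<subseteq> N\<^sub>1 \<union> N''"
proof (intro exI conjI)
  let ?N\<^sub>1 = "{x. m \<le> x \<and> \<not> h m \<le> x} \<union> (N' \<inter> {x. h m \<le> x})"
  have "m \<le> h m" using h unfolding closure_ops_def by blast
  then show "prime_set ?N\<^sub>1" by (rule prime_set_patch[OF N'(1)])
  show "?N\<^sub>1 \<inter> fixset h = {}"
    by (rule patch_disjoint_fixset[OF h N'(2)])
  show "N \<subseteq> ?N\<^sub>1 \<union> N''"
    using m(2) cover by blast
qed

lemma prime_set_cover: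
  fixes N :: "'a::{finite,lattice} set"
  assumes f: "f \<in> closure_ops" and g: "g \<in> closure_ops"
    and "prime_set N" "N \<inter> fixset f \<inter> fixset g = {}"
  shows "\<exists>N\<^sub>1 N\<^sub>2. prime_set N\<^sub>1 \<and> prime_set N\<^sub>2 \<and> N\<^sub>1 \<inter> fixset f = {} \<and> N\<^sub>2 \<inter> fixset g = {}
    \<and> N \<subseteq> N\<^sub>1 \<union> N\<^sub>2"
  using assms(3,4)
proof (induction "card N" arbitrary: N rule: less_induct)
  case less
  show ?case
  proof (cases "N = {}")
    case True
    then show ?thesis using prime_set_empty by blast
  next
    case False
    define m where "m = Inf_fin N"
    have m: "m \<in> N" "\<forall>y\<in>N. m \<le> y"
      using Inf_fin_mem_meet_closed[OF finite False subset_refl] less.prems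
        Inf_fin.coboundedI[OF finite]
      unfolding m_def prime_set_def by auto
    have IH: "\<exists>N\<^sub>1 N\<^sub>2. prime_set N\<^sub>1 \<and> prime_set N\<^sub>2 \<and> N\<^sub>1 \<inter> fixset f = {} \<and>
        N\<^sub>2 \<inter> fixset g = {} \<and> N \<inter> {x. h m \<le> x} \<subseteq> N\<^sub>1 \<union> N\<^sub>2"
      if "h \<in> closure_ops" "m \<notin> fixset h" for h
    proof (rule less.hyps)
      have "\<not> h m \<le> m"
        using that order.antisym unfolding closure_ops_def fixset_def by blast
      then have "N \<inter> {x. h m \<le> x} \<subset> N" using m by blast
      then show "card (N \<inter> {x. h m \<le> x}) < card N" by (simp add: psubset_card_mono)
      show "prime_set (N \<inter> {x. h m \<le> x})" using less.prems(1) by (rule prime_set_Int_upset)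
      show "N \<inter> {x. h m \<le> x} \<inter> fixset f \<inter> fixset g = {}" using less.prems(2) by blast
    qed
    show ?thesis
    proof (cases "m \<in> fixset f")
      case False
      then obtain N\<^sub>1' N\<^sub>2 where N: "prime_set N\<^sub>1'" "prime_set N\<^sub>2" "N\<^sub>1' \<inter> fixset f = {}"
        "N\<^sub>2 \<inter> fixset g = {}" "N \<inter> {x. f m \<le> x} \<subseteq> N\<^sub>1' \<union> N\<^sub>2"
        using IH[OF f] by blast
      obtain N\<^sub>1 where "prime_set N\<^sub>1" "N\<^sub>1 \<inter> fixset f = {}" "N \<subseteq> N\<^sub>1 \<union> N\<^sub>2"
        using prime_set_cover_step[OF f m N(1,3,5)] by blast
      with N(2,4) show ?thesis by blast
    next
      case True
      then have "m \<notin> fixset g" using m less.prems by blast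
      then obtain N\<^sub>1 N\<^sub>2' where N: "prime_set N\<^sub>1" "prime_set N\<^sub>2'" "N\<^sub>1 \<inter> fixset f = {}"
        "N\<^sub>2' \<inter> fixset g = {}" "N \<inter> {x. g m \<le> x} \<subseteq> N\<^sub>2' \<union> N\<^sub>1"
        using IH[OF g] by blast
      obtain N\<^sub>2 where "prime_set N\<^sub>2" "N\<^sub>2 \<inter> fixset g = {}" "N \<subseteq> N\<^sub>2 \<union> N\<^sub>1"
        using prime_set_cover_step[OF g m N(2,4,5)] by blast
      with N(1,3) show ?thesis by blast
    qed
  qed
qed

lemma additive_measure_mono:
  assumes "additive_measure \<mu>" "A \<subseteq> B"
  shows "\<mu> A \<le> \<mu> B"
proof -
  have "\<mu> B = \<mu> (A \<union> (B - A))" using assms(2) by (simp add: Un_absorb1)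
  also have "\<dots> = \<mu> A + \<mu> (B - A)" using assms(1) unfolding additive_measure_def by blast
  finally show ?thesis using assms(1) unfolding additive_measure_def by auto
qed

lemma additive_measure_subadditive:
  assumes "additive_measure \<mu>"
  shows "\<mu> (A \<union> B) \<le> \<mu> A + \<mu> B"
proof -
  have "\<mu> (A \<union> B) = \<mu> A + \<mu> (B - A)"
    using assms unfolding additive_measure_def by (metis Diff_disjoint Un_Diff_cancel)
  also have "\<dots> \<le> \<mu> A + \<mu> B" using additive_measure_mono[OF assms, of "B - A" B] by auto
  finally show ?thesis .
qed

lemma finite_rk_image: "finite {rk \<mu> w | w :: 'a::finite \<Rightarrow> 'a. P w}"
  by (rule finite_subset[of _ "range (rk \<mu>)"]) auto

lemma rk_le_fragility:
  fixes f :: "'a::{finite,lattice} \<Rightarrow> 'a"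
  assumes "w \<in> closure_ops" "w \<le> f" "prime_cl w"
  shows "rk \<mu> w \<le> fragility \<mu> f"
  unfolding fragility_def by (rule Max_ge[OF finite_rk_image]) (use assms in blast)

lemma fragility_le:
  fixes f :: "'a::{finite,lattice} \<Rightarrow> 'a"
  assumes "f \<in> closure_ops"
    and "\<And>w. w \<in> closure_ops \<Longrightarrow> w \<le> f \<Longrightarrow> prime_cl w \<Longrightarrow> rk \<mu> w \<le> c"
  shows "fragility \<mu> f \<le> c"
proof -
  have "id \<in> closure_ops" "id \<le> f" "prime_cl id"
    using assms(1) unfolding closure_ops_def prime_cl_def fixset_def le_fun_def by auto
  then have "{rk \<mu> w | w. w \<in> closure_ops \<and> w \<le> f \<and> prime_cl w} \<noteq> {}" by blast
  then show ?thesis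
    unfolding fragility_def using assms(2) by (subst Max_le_iff[OF finite_rk_image]) auto
qed

lemma measure_prime_set_le_fragility:
  fixes f :: "'a::{finite,lattice} \<Rightarrow> 'a"
  assumes "f \<in> closure_ops" "prime_set N" "N \<inter> fixset f = {}"
  shows "\<mu> N \<le> fragility \<mu> f"
proof -
  note w = prime_cl_closure_of_compl[OF assms(2)]
  have "closure_of (- N) \<le> f"
    using closure_ops_le_iff_fixset[OF assms(1) w(1)] w(2) assms(3) by blast
  then have "rk \<mu> (closure_of (- N)) \<le> fragility \<mu> f"
    using rk_le_fragility w by blast
  then show ?thesis unfolding rk_def w(2) by (simp add: Diff_Diff_Int)
qed

theorem mainTheorem19:
  fixes \<mu> :: "('a::{finite,lattice}) set \<Rightarrow> real"
    and f g :: "'a \<Rightarrow> 'a"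
  assumes "additive_measure \<mu>"
    and "f \<in> closure_ops" and "g \<in> closure_ops"
  shows "fragility \<mu> (cjoin f g) \<le> fragility \<mu> f + fragility \<mu> g"
proof (rule fragility_le)
  note fg = closure_ops_cjoin[OF assms(2,3)]
  show "cjoin f g \<in> closure_ops" by (rule fg(1))
  fix w assume w: "w \<in> closure_ops" "w \<le> cjoin f g" "prime_cl w"
  have "- fixset w \<inter> fixset f \<inter> fixset g = {}"
    using closure_ops_le_iff_fixset[OF fg(1) w(1)] w(2) fg(2) by blast
  then obtain N\<^sub>1 N\<^sub>2 where N: "prime_set N\<^sub>1" "prime_set N\<^sub>2" "N\<^sub>1 \<inter> fixset f = {}"
      "N\<^sub>2 \<inter> fixset g = {}" "- fixset w \<subseteq> N\<^sub>1 \<union> N\<^sub>2"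
    using prime_set_cover[OF assms(2,3) prime_set_nonfixed[OF w(1,3)]] by blast
  have "rk \<mu> w = \<mu> (- fixset w)" unfolding rk_def by (simp add: Compl_eq_Diff_UNIV)
  also have "\<dots> \<le> \<mu> (N\<^sub>1 \<union> N\<^sub>2)" by (rule additive_measure_mono[OF assms(1) N(5)])
  also have "\<dots> \<le> \<mu> N\<^sub>1 + \<mu> N\<^sub>2" by (rule additive_measure_subadditive[OF assms(1)])
  also have "\<dots> \<le> fragility \<mu> f + fragility \<mu> g"
    using measure_prime_set_le_fragility[OF assms(2) N(1,3)]
      measure_prime_set_le_fragility[OF assms(3) N(2,4)] by (rule add_mono)
  finally show "rk \<mu> w \<le> fragility \<mu> f + fragility \<mu> g" .
qed

end
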